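(* Let $a$ and $c$ be coprime positive integers with $a$ odd. Then for every integer $p\ge0$ and all $x,z\in\mathbb{R}$: if $c$ is even, $$\sum_{\mu=0}^{a-1}\mathcal{E}_{p}\Big(c\frac{\mu+x}{a}+z\Big)=a^{-p}\mathcal{E}_{p}(az+cx),$$ and if $c$ is odd, $$\sum_{\mu=0}^{a-1}(-1)^{\mu}\mathcal{E}_{p}\Big(c\frac{\mu+x}{a}+z\Big)=a^{-p}\mathcal{E}_{p}(az+cx).$$
   Context: $E_n(x)$ is the $n$th Euler polynomial, defined by $\frac{2e^{xt}}{e^t+1}=\sum_{n\ge0}E_n(x)\frac{t^n}{n!}$, and the $n$th Euler function $\mathcal{E}_n$ ($n\ge0$) is defined by $\mathcal{E}_n(x)=E_n(x)$ for $0\le x<1$ and $\mathcal{E}_n(x+m)=(-1)^m\mathcal{E}_n(x)$ for $m\in\mathbb{Z}$. *)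

theory Defs
  imports "HOL-Computational_Algebra.Formal_Power_Series" Complex_Main
begin

definition euler_poly :: "nat \<Rightarrow> real \<Rightarrow> real" where
  "euler_poly n x =
     fact n * fps_nth (fps_const 2 * fps_exp x / (fps_exp 1 + 1)) n"

definition euler_fun :: "nat \<Rightarrow> real \<Rightarrow> real" where
  "euler_fun n x = (-1) powi \<lfloor>x\<rfloor> * euler_poly n (frac x)"

end

theory Submission
  imports Defs "HOL-Number_Theory.Cong"
begin

(* For odd a, the multiplication theorem
     sum_{r<a} (-1)^r E_p((y + r)/a) = a^(-p) E_p(y)
   is an identity of generating functions: with q = e^(t/a), the alternating sum of
   2 e^(yt/a) q^r / (e^t + 1) is 2 e^(yt/a) / (1 + q), because
   (sum_{r<a} (-q)^r) (1 + q) = 1 + q^a = 1 + e^t for odd a; and this is the generating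
   function of E_p(y) with t replaced by t/a.
   For the Euler functions write a z + c x = k + s with k integral and 0 <= s < 1.  The
   mu-th argument is then (c mu + k + s)/a; splitting c mu + k = a Q + R with 0 <= R < a
   gives the value (-1)^Q E_p((R + s)/a), and since a is odd the weight (-1)^(c mu)
   combines with (-1)^Q into (-1)^(k + R).  Since c is coprime to a, R runs over all residues mod a as mu
   does, so the sum becomes the polynomial multiplication theorem at s. *)

unbundle fps_syntax

definition euler_egf :: "real \<Rightarrow> real fps" where
  "euler_egf x = fps_const 2 * fps_exp x / (fps_exp 1 + 1)"

lemma euler_poly_eq_euler_egf_nth: "euler_poly n x = fact n * euler_egf x $ n"
  by (simp add: euler_poly_def euler_egf_def)

lemma alternating_geometric_sum_mult:
  "(\<Sum>r<n. (- x) ^ r) * (1 + x) = 1 - (- x) ^ n" for x :: "'a::comm_ring_1"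
  by (induction n) (simp_all add: algebra_simps)

lemma euler_egf_compose_scale:
  "euler_egf y oo (fps_const c * fps_X) = fps_const 2 * fps_exp (c * y) / (fps_exp c + 1)"
  by (simp add: euler_egf_def fps_divide_compose fps_compose_mult_distrib fps_compose_add_distrib)

lemma euler_egf_alternating_sum:
  assumes "odd a"
  shows "(\<Sum>r<a. fps_const ((-1) ^ r) * euler_egf ((y + real r) / real a))
         = euler_egf y oo (fps_const (1 / real a) * fps_X)"
proof -
  define q where "q = fps_exp (1 / real a)"
  define P where "P = (\<Sum>r<a. (- q) ^ r)"
  define D :: "real fps" where "D = fps_exp 1 + 1"
  have "a > 0" using assms by (simp add: odd_pos)
  have "q ^ a = fps_exp 1"
    using \<open>a > 0\<close> by (simp add: q_def fps_exp_power_mult)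
  then have PD: "P * (1 + q) = D"
    using assms by (simp add: P_def D_def alternating_geometric_sum_mult)
  have "D $ 0 \<noteq> 0" by (simp add: D_def)
  then have "P \<noteq> 0" using PD by auto
  have "fps_const ((-1) ^ r) * euler_egf ((y + real r) / real a)
        = fps_const 2 * fps_exp (y / real a) * (- q) ^ r * inverse D" for r
  proof -
    have "fps_exp ((y + real r) / real a) = fps_exp (y / real a) * q ^ r"
      by (simp add: q_def fps_exp_power_mult flip: fps_exp_add_mult add_divide_distrib)
    then have "euler_egf ((y + real r) / real a) = fps_const 2 * fps_exp (y / real a) * q ^ r * inverse D"
      using \<open>D $ 0 \<noteq> 0\<close> by (simp add: euler_egf_def D_def fps_divide_unit)
    moreover have "(- q) ^ r = fps_const ((-1) ^ r) * q ^ r"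
      by (metis power_minus fps_const_neg fps_const_power fps_const_1_eq_1)
    ultimately show ?thesis
      by (simp only: ac_simps)
  qed
  then have "(\<Sum>r<a. fps_const ((-1) ^ r) * euler_egf ((y + real r) / real a))
      = fps_const 2 * fps_exp (y / real a) * P * inverse D"
    by (simp add: P_def sum_distrib_left sum_distrib_right)
  also have "\<dots> = fps_const 2 * fps_exp (y / real a) * P / (P * (1 + q))"
    using \<open>D $ 0 \<noteq> 0\<close> by (simp add: PD fps_divide_unit)
  also have "\<dots> = fps_const 2 * fps_exp (y / real a) / (q + 1)"
    using \<open>P \<noteq> 0\<close> by (simp add: mult.commute[of P] add.commute)
  also have "\<dots> = euler_egf y oo (fps_const (1 / real a) * fps_X)"
    by (simp add: euler_egf_compose_scale q_def)
  finally show ?thesis .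
qed

lemma euler_poly_multiplication_odd:
  assumes "odd a"
  shows "(\<Sum>r<a. (-1) ^ r * euler_poly p ((y + real r) / real a)) = euler_poly p y / real a ^ p"
proof -
  have "(\<Sum>r<a. (-1) ^ r * euler_poly p ((y + real r) / real a))
      = fact p * (\<Sum>r<a. fps_const ((-1) ^ r) * euler_egf ((y + real r) / real a)) $ p"
    by (simp add: euler_poly_eq_euler_egf_nth fps_sum_nth sum_distrib_left mult_ac)
  also have "\<dots> = euler_poly p y / real a ^ p"
    using assms by (simp add: euler_egf_alternating_sum euler_poly_eq_euler_egf_nth power_one_over)
  finally show ?thesis .
qed

lemma euler_fun_eq_euler_poly:
  assumes "0 \<le> x" "x < 1"
  shows "euler_fun n x = euler_poly n x"
proof -
  have "\<lfloor>x\<rfloor> = 0"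
    using assms by (simp add: floor_eq_iff)
  with assms show ?thesis
    by (simp add: euler_fun_def frac_eq)
qed

lemma euler_fun_add_of_int: "euler_fun n (x + of_int m) = (-1) powi m * euler_fun n x"
  by (simp add: euler_fun_def power_int_add)

lemma minus_one_powi_add_div_odd:
  fixes a N :: int
  assumes "odd a"
  shows "(-1::real) powi N * (-1) powi (N div a) = (-1) powi (N mod a)"
proof -
  have "N + N div a = (a + 1) * (N div a) + N mod a"
    by (simp add: algebra_simps)
  then have "even (N + N div a) \<longleftrightarrow> even (N mod a)"
    using assms by simp
  then show ?thesis
    by (auto simp: power_int_minus_left)
qed

lemma euler_fun_of_int_add_div_odd:
  fixes a :: nat and N :: int
  assumes "odd a" "0 \<le> s" "s < 1"
  defines "r \<equiv> nat (N mod int a)"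
  shows "(-1) powi N * euler_fun n ((of_int N + s) / real a)
         = (-1) ^ r * euler_poly n ((s + real r) / real a)"
proof -
  have "a > 0" using assms(1) by (simp add: odd_pos)
  have r: "int r = N mod int a" "r < a"
    using \<open>a > 0\<close> by (simp_all add: r_def nat_less_iff)
  have "of_int N = real a * of_int (N div int a) + real r"
    by (metis r(1) div_mult_mod_eq of_int_add of_int_mult of_int_of_nat_eq mult.commute)
  then have arg: "(of_int N + s) / real a = (s + real r) / real a + of_int (N div int a)"
    using \<open>a > 0\<close> by (simp add: field_simps)
  have "s + real r < real a"
    using r(2) assms(3) by linarith
  then have "euler_fun n ((s + real r) / real a) = euler_poly n ((s + real r) / real a)"
    using assms(2) \<open>a > 0\<close> by (intro euler_fun_eq_euler_poly) simp_all
  moreover have "(-1::real) powi N * (-1) powi (N div int a) = (-1) ^ r"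
    using minus_one_powi_add_div_odd[of "int a" N] assms(1) by (simp flip: r(1))
  ultimately show ?thesis
    unfolding arg euler_fun_add_of_int by (metis mult.assoc)
qed

lemma bij_betw_affine_mod:
  fixes a c :: nat and k :: int
  assumes "a > 0" "coprime a c"
  shows "bij_betw (\<lambda>m. nat ((int c * int m + k) mod int a)) {..<a} {..<a}"
    (is "bij_betw ?g _ _")
proof -
  have "inj_on ?g {..<a}"
  proof (rule inj_onI)
    fix m n assume "m \<in> {..<a}" "n \<in> {..<a}" "?g m = ?g n"
    then have "[int c * int m + k = int c * int n + k] (mod int a)"
      using \<open>a > 0\<close> by (simp add: cong_def eq_nat_nat_iff)
    then have "[int m = int n] (mod int a)"
      using assms(2) by (simp add: cong_add_rcancel cong_mult_lcancel coprime_commute)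
    with \<open>m \<in> {..<a}\<close> \<open>n \<in> {..<a}\<close> show "m = n"
      by (simp add: cong_int_iff cong_less_imp_eq_nat)
  qed
  moreover have "?g ` {..<a} \<subseteq> {..<a}"
    using \<open>a > 0\<close> by (auto simp: nat_less_iff)
  ultimately show ?thesis
    by (simp add: bij_betw_def endo_inj_surj)
qed

lemma euler_fun_multiplication_coprime:
  fixes a c :: nat
  assumes "odd a" "coprime a c"
  shows "(\<Sum>\<mu><a. (-1) ^ (c * \<mu>) * euler_fun p (real c * ((real \<mu> + x) / real a) + z))
         = euler_fun p (real a * z + real c * x) / real a ^ p"
proof -
  define k where "k = \<lfloor>real a * z + real c * x\<rfloor>"
  define s where "s = frac (real a * z + real c * x)"
  define g where "g \<mu> = nat ((int c * int \<mu> + k) mod int a)" for \<mu>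
  have "a > 0" using assms(1) by (simp add: odd_pos)
  have s: "0 \<le> s" "s < 1" by (simp_all add: s_def frac_lt_1)
  have "(-1) ^ (c * \<mu>) * euler_fun p (real c * ((real \<mu> + x) / real a) + z)
        = (-1) powi k * ((-1) ^ g \<mu> * euler_poly p ((s + real (g \<mu>)) / real a))" for \<mu>
  proof -
    have "real a * z + real c * x = of_int k + s"
      by (simp add: k_def s_def frac_def)
    then have "real c * ((real \<mu> + x) / real a) + z = (of_int (int c * int \<mu> + k) + s) / real a"
      using \<open>a > 0\<close> by (simp add: field_simps)
    moreover have "(-1::real) ^ (c * \<mu>) = (-1) powi k * (-1) powi (int c * int \<mu> + k)"
      by (auto simp: power_int_add power_int_minus_left simp flip: of_nat_mult)
    ultimately show ?thesis
      using euler_fun_of_int_add_div_odd[OF assms(1) s, of "int c * int \<mu> + k" p]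
      by (simp add: g_def mult.assoc)
  qed
  then have "(\<Sum>\<mu><a. (-1) ^ (c * \<mu>) * euler_fun p (real c * ((real \<mu> + x) / real a) + z))
      = (-1) powi k * (\<Sum>\<mu><a. (-1) ^ g \<mu> * euler_poly p ((s + real (g \<mu>)) / real a))"
    by (simp add: sum_distrib_left)
  also have "(\<Sum>\<mu><a. (-1) ^ g \<mu> * euler_poly p ((s + real (g \<mu>)) / real a))
      = (\<Sum>r<a. (-1) ^ r * euler_poly p ((s + real r) / real a))"
    using bij_betw_affine_mod[OF \<open>a > 0\<close> assms(2), of k]
    unfolding g_def by (rule sum.reindex_bij_betw)
  also have "\<dots> = euler_poly p s / real a ^ p"
    by (rule euler_poly_multiplication_odd[OF assms(1)])
  also have "(-1) powi k * (euler_poly p s / real a ^ p) = euler_fun p (real a * z + real c * x) / real a ^ p"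
    by (simp add: euler_fun_def k_def s_def)
  finally show ?thesis .
qed

theorem lemma1:
  fixes a c :: nat and p :: nat and x z :: real
  assumes "a > 0" "c > 0" "coprime a c" "odd a"
  shows "(even c \<longrightarrow>
            (\<Sum>\<mu><a. euler_fun p (real c * ((real \<mu> + x) / real a) + z))
              = real a powi (- int p) * euler_fun p (real a * z + real c * x))
       \<and> (odd c \<longrightarrow>
            (\<Sum>\<mu><a. (-1) ^ \<mu> * euler_fun p (real c * ((real \<mu> + x) / real a) + z))
              = real a powi (- int p) * euler_fun p (real a * z + real c * x))"
proof -
  have "(-1::real) ^ (c * \<mu>) = (if even c then 1 else (-1) ^ \<mu>)" for \<mu>
    by (simp add: power_mult)
  moreover have "real a powi (- int p) * y = y / real a ^ p" for y
    by (simp add: power_int_minus divide_inverse mult.commute)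
  ultimately show ?thesis
    using euler_fun_multiplication_coprime[OF assms(4,3), of p x z] by auto
qed

end
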